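(* Let $p\ge1$ be an integer, and let $\bm U^0\in\mathbb V_h$ and $\bm U^1,\dots,\bm U^M\in\mathbb V_h$ satisfy the LCN-MP scheme $$(\bm I+\mathbb A^2)\frac{\bm U^1-\bm U^0}{\tau}+\mathbb D(\bm U^0)\frac{\bm U^1+\bm U^0}{2}=0,$$ $$(\bm I+\mathbb A^2)\frac{\bm U^{n+1}-\bm U^n}{\tau}+\mathbb D\Big(\frac{3\bm U^n-\bm U^{n-1}}{2}\Big)\frac{\bm U^{n+1}+\bm U^n}{2}=0,\quad n=1,\dots,M-1.$$ Then the discrete momentum $P^n=\|\bm U^n\|_h^2+|\bm U^n|_{2,h}^2$ satisfies $P^n=P^{n-1}=\cdots=P^0$ for all $0\le n\le M$.
   Context: $\Omega=[x_L,x_R]\times[y_L,y_R]$, $l_1=x_R-x_L$, $l_2=y_R-y_L$, $N_1,N_2$ even, $h_r=l_r/N_r$, grid points $x_{j_1}=x_L+j_1h_1$, $y_{j_2}=y_L+j_2h_2$, $0\le j_r\le N_r-1$; $\tau>0$. $\mathbb V_h$ is the space of grid functions $U_{j_1,j_2}$ periodic in both indices, identified with vectors $\bm U=(U_{0,0},U_{1,0},\dots,U_{N_1-1,0},U_{0,1},\dots,U_{N_1-1,N_2-1})^T$ ($j_1$ fastest). $\langle\bm U,\bm V\rangle_h=h_1h_2\sum_{j_1,j_2}U_{j_1,j_2}V_{j_1,j_2}$, $\|\bm U\|_h^2=\langle\bm U,\bm U\rangle_h$. For $r=1,2$, $\mu_r=2\pi/l_r$ and $g^{(1)}_{k}(x)=\frac1{N_1}\sum_{l=-N_1/2}^{N_1/2}\frac1{a_l}e^{\mathrm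 il\mu_1(x-x_k)}$ with $a_l=1$ for $|l|<N_1/2$, $a_{\pm N_1/2}=2$ (similarly $g^{(2)}_k(y)$ with $N_2,\mu_2,y_k$). $\bm D_s^x$ is the $N_1\times N_1$ matrix with entries $\frac{d^s}{dx^s}g^{(1)}_k(x_j)$ and $\bm D_s^y$ the $N_2\times N_2$ matrix with entries $\frac{d^s}{dy^s}g^{(2)}_k(y_j)$. With $\otimes$ the Kronecker product: $\mathbb A=\bm I_{N_2}\otimes\bm D_2^x+\bm D_2^y\otimes\bm I_{N_1}$, $\mathbb B=\bm I_{N_2}\otimes\bm D_3^x+\bm D_2^y\otimes\bm D_1^x$, $\mathbb L_h=\bm I_{N_2}\otimes\bm D_1^x+\bm D_1^y\otimes\bm I_{N_1}$, and for $\bm W\in\mathbb V_h$, $\mathbb D(\bm W)=\mathbb B+\mathbb L_h+\frac1{p+2}(\mathrm{diag}(\bm W^p)\mathbb L_h+\mathbb L_h\mathrm{diag}(\bm W^p))$, $\bm W^p$ the componentwise $p$-th power. $|\bm U|_{2,h}=\|\mathbb A\bm U\|_h$. *)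

theory Defs
  imports "HOL-Analysis.Analysis" "Jordan_Normal_Form.Matrix"
begin

definition kron :: "'a::times mat \<Rightarrow> 'a mat \<Rightarrow> 'a mat" where
  "kron A B = mat (dim_row A * dim_row B) (dim_col A * dim_col B)
     (\<lambda>(i, j). A $$ (i div dim_row B, j div dim_col B) * B $$ (i mod dim_row B, j mod dim_col B))"

definition diagv :: "'a::zero vec \<Rightarrow> 'a mat" where
  "diagv w = mat (dim_vec w) (dim_vec w) (\<lambda>(i, j). if i = j then w $ i else 0)"

definition acoef :: "nat \<Rightarrow> int \<Rightarrow> real" where
  "acoef N l = (if \<bar>l\<bar> = int (N div 2) then 2 else 1)"

text \<open>The cardinal function g_k (extended to a complex argument, an entire function;
  its derivatives at real points are the real derivatives).\<close>
definition gcard :: "nat \<Rightarrow> real \<Rightarrow> real \<Rightarrow> complex \<Rightarrow> complex" where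
  "gcard N \<mu> xk z = (1 / of_nat N) *
     (\<Sum>l\<in>{- int (N div 2) .. int (N div 2)}.
        complex_of_real (1 / acoef N l) * exp (\<i> * of_int l * of_real \<mu> * (z - of_real xk)))"

definition Dmat :: "nat \<Rightarrow> nat \<Rightarrow> real \<Rightarrow> real \<Rightarrow> real mat" where
  "Dmat s N a len = mat N N (\<lambda>(j, k).
     Re ((deriv ^^ s) (gcard N (2 * pi / len) (a + real k * len / real N))
          (of_real (a + real j * len / real N))))"

definition Aop :: "real \<Rightarrow> real \<Rightarrow> nat \<Rightarrow> real \<Rightarrow> real \<Rightarrow> nat \<Rightarrow> real mat" where
  "Aop xL xR N1 yL yR N2 =
     kron (1\<^sub>m N2) (Dmat 2 N1 xL (xR - xL)) + kron (Dmat 2 N2 yL (yR - yL)) (1\<^sub>m N1)"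

definition Bop :: "real \<Rightarrow> real \<Rightarrow> nat \<Rightarrow> real \<Rightarrow> real \<Rightarrow> nat \<Rightarrow> real mat" where
  "Bop xL xR N1 yL yR N2 =
     kron (1\<^sub>m N2) (Dmat 3 N1 xL (xR - xL)) + kron (Dmat 2 N2 yL (yR - yL)) (Dmat 1 N1 xL (xR - xL))"

definition Lop :: "real \<Rightarrow> real \<Rightarrow> nat \<Rightarrow> real \<Rightarrow> real \<Rightarrow> nat \<Rightarrow> real mat" where
  "Lop xL xR N1 yL yR N2 =
     kron (1\<^sub>m N2) (Dmat 1 N1 xL (xR - xL)) + kron (Dmat 1 N2 yL (yR - yL)) (1\<^sub>m N1)"

definition Dop :: "real \<Rightarrow> real \<Rightarrow> nat \<Rightarrow> real \<Rightarrow> real \<Rightarrow> nat \<Rightarrow> nat \<Rightarrow> real vec \<Rightarrow> real mat" where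
  "Dop xL xR N1 yL yR N2 p W =
     Bop xL xR N1 yL yR N2 + Lop xL xR N1 yL yR N2 +
     (1 / real (p + 2)) \<cdot>\<^sub>m
       (diagv (map_vec (\<lambda>w. w ^ p) W) * Lop xL xR N1 yL yR N2
        + Lop xL xR N1 yL yR N2 * diagv (map_vec (\<lambda>w. w ^ p) W))"

definition inner_h :: "real \<Rightarrow> real \<Rightarrow> nat \<Rightarrow> real \<Rightarrow> real \<Rightarrow> nat \<Rightarrow> real vec \<Rightarrow> real vec \<Rightarrow> real" where
  "inner_h xL xR N1 yL yR N2 U V = ((xR - xL) / real N1) * ((yR - yL) / real N2) * (U \<bullet> V)"

definition normh_sq :: "real \<Rightarrow> real \<Rightarrow> nat \<Rightarrow> real \<Rightarrow> real \<Rightarrow> nat \<Rightarrow> real vec \<Rightarrow> real" where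
  "normh_sq xL xR N1 yL yR N2 U = inner_h xL xR N1 yL yR N2 U U"

definition semi2h_sq :: "real \<Rightarrow> real \<Rightarrow> nat \<Rightarrow> real \<Rightarrow> real \<Rightarrow> nat \<Rightarrow> real vec \<Rightarrow> real" where
  "semi2h_sq xL xR N1 yL yR N2 U =
     normh_sq xL xR N1 yL yR N2 (Aop xL xR N1 yL yR N2 *\<^sub>v U)"

definition momentum :: "real \<Rightarrow> real \<Rightarrow> nat \<Rightarrow> real \<Rightarrow> real \<Rightarrow> nat \<Rightarrow> real vec \<Rightarrow> real" where
  "momentum xL xR N1 yL yR N2 U =
     normh_sq xL xR N1 yL yR N2 U + semi2h_sq xL xR N1 yL yR N2 U"

end

theory Submission
  imports Defs
begin

text \<open>Every step of the scheme has the form \<open>Q (b - a) / \<tau> + S (b + a) / 2 = 0\<close> with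
  \<open>Q = I + \<bbbA>\<^sup>2\<close> symmetric and \<open>S = \<bbbD>(W)\<close> skew-symmetric, whatever the extrapolated
  argument \<open>W\<close> is. Pairing with \<open>b + a\<close> kills the \<open>S\<close>-term and leaves \<open>b\<bullet>Qb = a\<bullet>Qa\<close>,
  while \<open>P = h\<^sub>1 h\<^sub>2 U\<bullet>QU\<close>. The sign structure comes from \<open>(D\<^sub>s)\<^sup>T = (-1)\<^sup>s D\<^sub>s\<close>: the
  \<open>s\<close>-th derivative of a cardinal function is a trigonometric sum over the frequencies
  \<open>-N/2..N/2\<close> with weights \<open>1/a\<^sub>l\<close> that are even in \<open>l\<close>. Kronecker products multiply these
  signs, and the anticommutator \<open>diag(W\<^sup>p) \<bbbL> + \<bbbL> diag(W\<^sup>p)\<close> inherits the skewness of \<open>\<bbbL>\<close>.\<close>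

definition signed_symmetric :: "'a::comm_ring_1 \<Rightarrow> nat \<Rightarrow> 'a mat \<Rightarrow> bool" where
  "signed_symmetric e n A \<longleftrightarrow> A \<in> carrier_mat n n \<and> transpose_mat A = e \<cdot>\<^sub>m A"

lemma signed_symmetricI:
  "A \<in> carrier_mat n n \<Longrightarrow> transpose_mat A = e \<cdot>\<^sub>m A \<Longrightarrow> signed_symmetric e n A"
  unfolding signed_symmetric_def by blast

lemma signed_symmetricD:
  assumes "signed_symmetric e n A"
  shows "A \<in> carrier_mat n n" and "transpose_mat A = e \<cdot>\<^sub>m A"
  using assms unfolding signed_symmetric_def by blast+

lemma signed_symmetric_1_transpose:
  assumes "signed_symmetric 1 n A"
  shows "transpose_mat A = A"
  using signed_symmetricD[OF assms] by (auto intro!: eq_matI)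

lemma signed_symmetric_one_mat: "signed_symmetric 1 n (1\<^sub>m n)"
  by (rule signed_symmetricI) (auto intro: eq_matI)

lemma signed_symmetric_add:
  assumes "signed_symmetric e n A" "signed_symmetric e n B"
  shows "signed_symmetric e n (A + B)"
  using assms unfolding signed_symmetric_def
  by (auto simp: transpose_add add_smult_distrib_left_mat)

lemma signed_symmetric_smult:
  assumes "signed_symmetric e n A"
  shows "signed_symmetric e n (c \<cdot>\<^sub>m A)"
proof -
  have A: "A \<in> carrier_mat n n" and At: "transpose_mat A = e \<cdot>\<^sub>m A"
    using assms by (rule signed_symmetricD)+
  have "transpose_mat (c \<cdot>\<^sub>m A) = c \<cdot>\<^sub>m transpose_mat A"
    by (rule eq_matI) auto
  also have "\<dots> = e \<cdot>\<^sub>m (c \<cdot>\<^sub>m A)"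
    unfolding At using A by (auto intro!: eq_matI simp: mult.left_commute)
  finally show ?thesis using A by (intro signed_symmetricI) auto
qed

lemma signed_symmetric_mult_self:
  assumes "signed_symmetric e n A"
  shows "signed_symmetric (e * e) n (A * A)"
proof -
  have A: "A \<in> carrier_mat n n" and At: "transpose_mat A = e \<cdot>\<^sub>m A"
    using assms by (rule signed_symmetricD)+
  have "transpose_mat (A * A) = (e \<cdot>\<^sub>m A) * (e \<cdot>\<^sub>m A)"
    using A At by (simp add: transpose_mult)
  also have "\<dots> = e \<cdot>\<^sub>m (e \<cdot>\<^sub>m (A * A))"
    using A by (simp add: mult_smult_assoc_mat[of _ n n] mult_smult_distrib[of _ n n])
  also have "\<dots> = (e * e) \<cdot>\<^sub>m (A * A)"
    by (rule eq_matI) auto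
  finally show ?thesis using A by (intro signed_symmetricI) auto
qed

lemma signed_symmetric_anticommutator:
  assumes "signed_symmetric 1 n D" "signed_symmetric e n L"
  shows "signed_symmetric e n (D * L + L * D)"
proof -
  have D: "D \<in> carrier_mat n n" "transpose_mat D = D"
    and L: "L \<in> carrier_mat n n" "transpose_mat L = e \<cdot>\<^sub>m L"
    using assms by (auto dest: signed_symmetricD signed_symmetric_1_transpose)
  have "transpose_mat (D * L + L * D) = (e \<cdot>\<^sub>m L) * D + D * (e \<cdot>\<^sub>m L)"
    using D L by (simp add: transpose_add[of _ n n] transpose_mult[of _ n n])
  also have "\<dots> = e \<cdot>\<^sub>m (D * L + L * D)"
    using D L by (simp add: mult_smult_assoc_mat[of _ n n] mult_smult_distrib[of _ n n]
        add_smult_distrib_left_mat[of _ n n] comm_add_mat[of _ n n])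
  finally show ?thesis using D L by (intro signed_symmetricI) auto
qed

lemma transpose_kron: "transpose_mat (kron A B) = kron (transpose_mat A) (transpose_mat B)"
proof (rule eq_matI)
  fix i j
  assume "i < dim_row (kron (transpose_mat A) (transpose_mat B))"
    and "j < dim_col (kron (transpose_mat A) (transpose_mat B))"
  then have "i < dim_col A * dim_col B" "j < dim_row A * dim_row B"
    by (simp_all add: kron_def)
  moreover from this have "dim_col B > 0" "dim_row B > 0"
    by (auto intro: gr0I)
  ultimately show "transpose_mat (kron A B) $$ (i, j) = kron (transpose_mat A) (transpose_mat B) $$ (i, j)"
    by (simp add: kron_def less_mult_imp_div_less)
qed (simp_all add: kron_def)

lemma kron_smult:
  fixes A B :: "'a::comm_semiring mat"
  shows "kron (a \<cdot>\<^sub>m A) (b \<cdot>\<^sub>m B) = (a * b) \<cdot>\<^sub>m kron A B"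
proof (rule eq_matI)
  fix i j
  assume "i < dim_row ((a * b) \<cdot>\<^sub>m kron A B)" and "j < dim_col ((a * b) \<cdot>\<^sub>m kron A B)"
  then have "i < dim_row A * dim_row B" "j < dim_col A * dim_col B"
    by (simp_all add: kron_def)
  moreover from this have "dim_row B > 0" "dim_col B > 0"
    by (auto intro: gr0I)
  ultimately show "kron (a \<cdot>\<^sub>m A) (b \<cdot>\<^sub>m B) $$ (i, j) = ((a * b) \<cdot>\<^sub>m kron A B) $$ (i, j)"
    by (simp add: kron_def less_mult_imp_div_less ac_simps)
qed (simp_all add: kron_def)

lemma signed_symmetric_kron:
  assumes "signed_symmetric e1 n1 A" "signed_symmetric e2 n2 B"
  shows "signed_symmetric (e1 * e2) (n1 * n2) (kron A B)"
proof -
  have A: "A \<in> carrier_mat n1 n1" "transpose_mat A = e1 \<cdot>\<^sub>m A"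
    and B: "B \<in> carrier_mat n2 n2" "transpose_mat B = e2 \<cdot>\<^sub>m B"
    using assms by (auto dest: signed_symmetricD)
  have "transpose_mat (kron A B) = (e1 * e2) \<cdot>\<^sub>m kron A B"
    by (simp only: transpose_kron A(2) B(2) kron_smult)
  with A B show ?thesis
    by (intro signed_symmetricI) (auto simp: kron_def)
qed

lemma smult_mat_mult_vec:
  fixes A :: "'a::comm_semiring_0 mat"
  assumes "A \<in> carrier_mat nr nc" "v \<in> carrier_vec nc"
  shows "(k \<cdot>\<^sub>m A) *\<^sub>v v = k \<cdot>\<^sub>v (A *\<^sub>v v)"
  using assms by (intro eq_vecI) auto

lemma skew_quadratic_form_eq_0:
  fixes S :: "'a::field_char_0 mat"
  assumes "signed_symmetric (-1) n S" "v \<in> carrier_vec n"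
  shows "v \<bullet> (S *\<^sub>v v) = 0"
proof -
  have S: "S \<in> carrier_mat n n" "transpose_mat S = (-1) \<cdot>\<^sub>m S"
    using assms(1) by (rule signed_symmetricD)+
  have "v \<bullet> (S *\<^sub>v v) = (transpose_mat S *\<^sub>v v) \<bullet> v"
    using transpose_vec_mult_scalar[OF S(1) assms(2) assms(2)] ..
  also have "\<dots> = - (v \<bullet> (S *\<^sub>v v))"
    using S assms(2) by (simp add: smult_mat_mult_vec[of _ n n] comm_scalar_prod[of _ n])
  finally show ?thesis by simp
qed

lemma symmetric_bilinear_form_commute:
  fixes Q :: "'a::comm_ring_1 mat"
  assumes "signed_symmetric 1 n Q" "a \<in> carrier_vec n" "b \<in> carrier_vec n"
  shows "a \<bullet> (Q *\<^sub>v b) = b \<bullet> (Q *\<^sub>v a)"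
proof -
  have Q: "Q \<in> carrier_mat n n" "transpose_mat Q = Q"
    using assms(1) by (auto dest: signed_symmetricD signed_symmetric_1_transpose)
  have "a \<bullet> (Q *\<^sub>v b) = (Q *\<^sub>v a) \<bullet> b"
    using transpose_vec_mult_scalar[OF Q(1) assms(3) assms(2)] Q(2) by simp
  also have "\<dots> = b \<bullet> (Q *\<^sub>v a)"
    using Q assms by (simp add: comm_scalar_prod[of _ n])
  finally show ?thesis .
qed

lemma midpoint_step_preserves_quadratic_form:
  fixes Q S :: "'a::field_char_0 mat"
  assumes Q: "signed_symmetric 1 n Q" and S: "signed_symmetric (-1) n S"
    and a: "a \<in> carrier_vec n" and b: "b \<in> carrier_vec n" and "c \<noteq> 0"
    and step: "Q *\<^sub>v (c \<cdot>\<^sub>v (b - a)) + S *\<^sub>v (d \<cdot>\<^sub>v (b + a)) = 0\<^sub>v n"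
  shows "b \<bullet> (Q *\<^sub>v b) = a \<bullet> (Q *\<^sub>v a)"
proof -
  have Qc: "Q \<in> carrier_mat n n" and Sc: "S \<in> carrier_mat n n"
    using Q S by (auto dest: signed_symmetricD)
  have ba: "b + a \<in> carrier_vec n" "b - a \<in> carrier_vec n"
    using a b by auto
  have "0 = (b + a) \<bullet> (Q *\<^sub>v (c \<cdot>\<^sub>v (b - a)) + S *\<^sub>v (d \<cdot>\<^sub>v (b + a)))"
    unfolding step using ba by simp
  also have "\<dots> = c * ((b + a) \<bullet> (Q *\<^sub>v (b - a))) + d * ((b + a) \<bullet> (S *\<^sub>v (b + a)))"
    using ba Qc Sc by (simp add: mult_mat_vec[of _ n n] scalar_prod_add_distrib[of _ n])
  also have "(b + a) \<bullet> (S *\<^sub>v (b + a)) = 0"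
    using S ba(1) by (rule skew_quadratic_form_eq_0)
  also have "(b + a) \<bullet> (Q *\<^sub>v (b - a)) = b \<bullet> (Q *\<^sub>v b) - a \<bullet> (Q *\<^sub>v a)"
    using a b Qc symmetric_bilinear_form_commute[OF Q a b]
    by (simp add: mult_minus_distrib_mat_vec[of _ n n] add_scalar_prod_distrib[of _ n]
        scalar_prod_minus_distrib[of _ n])
  finally show ?thesis using \<open>c \<noteq> 0\<close> by simp
qed

lemma exp_term_has_field_derivative:
  fixes C \<omega> w :: complex
  shows "((\<lambda>z. C * \<omega> ^ s * exp (\<omega> * (z - w))) has_field_derivative C * \<omega> ^ Suc s * exp (\<omega> * (z - w))) (at z)"
  by (auto intro!: derivative_eq_intros)

definition cardinal_kernel :: "nat \<Rightarrow> real \<Rightarrow> nat \<Rightarrow> complex \<Rightarrow> complex" where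
  "cardinal_kernel N \<mu> s z = (1 / of_nat N) *
     (\<Sum>l\<in>{- int (N div 2) .. int (N div 2)}.
        complex_of_real (1 / acoef N l) * (\<i> * of_int l * of_real \<mu>) ^ s
          * exp (\<i> * of_int l * of_real \<mu> * z))"

lemma cardinal_kernel_has_field_derivative:
  "((\<lambda>z. cardinal_kernel N \<mu> s (z - w)) has_field_derivative cardinal_kernel N \<mu> (Suc s) (z - w)) (at z)"
  unfolding cardinal_kernel_def
  by (intro DERIV_cmult DERIV_sum exp_term_has_field_derivative)

lemma higher_deriv_gcard:
  "(deriv ^^ s) (gcard N \<mu> xk) = (\<lambda>z. cardinal_kernel N \<mu> s (z - of_real xk))"
proof (induction s)
  case 0
  show ?case
    by (simp add: gcard_def cardinal_kernel_def)
next
  case (Suc s)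
  then show ?case
    using DERIV_imp_deriv[OF cardinal_kernel_has_field_derivative] by auto
qed

lemma sum_exp_reflect:
  fixes c \<omega> :: "int \<Rightarrow> complex"
  assumes c_even: "\<And>l. c (- l) = c l" and \<omega>_odd: "\<And>l. \<omega> (- l) = - \<omega> l"
  shows "(\<Sum>l\<in>{-K..K}. c l * \<omega> l ^ s * exp (\<omega> l * - z))
    = (-1) ^ s * (\<Sum>l\<in>{-K..K}. c l * \<omega> l ^ s * exp (\<omega> l * z))"
proof -
  have "(\<Sum>l\<in>{-K..K}. c l * \<omega> l ^ s * exp (\<omega> l * - z))
      = (\<Sum>l\<in>{-K..K}. c (- l) * \<omega> (- l) ^ s * exp (\<omega> (- l) * - z))"
    by (rule sum.reindex_bij_witness[of _ uminus uminus]) auto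
  also have "\<dots> = (\<Sum>l\<in>{-K..K}. (-1) ^ s * (c l * \<omega> l ^ s * exp (\<omega> l * z)))"
  proof (rule sum.cong)
    fix l
    have "\<omega> (- l) ^ s = (-1) ^ s * \<omega> l ^ s"
      unfolding \<omega>_odd by (rule power_minus)
    then show "c (- l) * \<omega> (- l) ^ s * exp (\<omega> (- l) * - z) = (-1) ^ s * (c l * \<omega> l ^ s * exp (\<omega> l * z))"
      using c_even \<omega>_odd by simp
  qed (rule refl)
  finally show ?thesis
    by (simp only: sum_distrib_left)
qed

lemma cardinal_kernel_minus:
  "cardinal_kernel N \<mu> s (- z) = (-1) ^ s * cardinal_kernel N \<mu> s z"
  unfolding cardinal_kernel_def
  by (subst sum_exp_reflect) (auto simp: acoef_def)

lemma Dmat_index: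
  assumes "j < N" "k < N"
  shows "Dmat s N a len $$ (j, k)
    = Re (cardinal_kernel N (2 * pi / len) s (of_real ((real j - real k) * len / real N)))"
proof -
  have "a + real j * len / real N - (a + real k * len / real N) = (real j - real k) * len / real N"
    by (simp add: left_diff_distrib diff_divide_distrib)
  then have "of_real (a + real j * len / real N) - of_real (a + real k * len / real N)
      = (of_real ((real j - real k) * len / real N) :: complex)"
    by (metis of_real_diff)
  then show ?thesis
    using assms by (simp add: Dmat_def higher_deriv_gcard)
qed

lemma signed_symmetric_Dmat: "signed_symmetric ((-1) ^ s) N (Dmat s N a len)"
proof (rule signed_symmetricI)
  have D: "Dmat s N a len \<in> carrier_mat N N"
    by (simp add: Dmat_def)
  then show "Dmat s N a len \<in> carrier_mat N N" .
  let ?K = "\<lambda>j k. cardinal_kernel N (2 * pi / len) s (of_real ((real j - real k) * len / real N))"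
  have entry: "Dmat s N a len $$ (j, i) = (-1) ^ s * Dmat s N a len $$ (i, j)"
    if "i < N" "j < N" for i j
  proof -
    have swap: "(real j - real i) * len / real N = - ((real i - real j) * len / real N)"
      by (simp only: minus_divide_left minus_mult_left minus_diff_eq)
    have "?K j i = (-1) ^ s * ?K i j"
      unfolding swap of_real_minus by (rule cardinal_kernel_minus)
    moreover have "Re ((-1) ^ s * w) = (-1) ^ s * Re w" for w :: complex
      by (cases "even s") simp_all
    ultimately show ?thesis
      using that by (simp only: Dmat_index)
  qed
  show "transpose_mat (Dmat s N a len) = (-1) ^ s \<cdot>\<^sub>m Dmat s N a len"
  proof (rule eq_matI)
    fix i j
    assume "i < dim_row ((-1) ^ s \<cdot>\<^sub>m Dmat s N a len)" "j < dim_col ((-1) ^ s \<cdot>\<^sub>m Dmat s N a len)"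
    with D have "i < N" "j < N"
      by auto
    with D show "transpose_mat (Dmat s N a len) $$ (i, j) = ((-1) ^ s \<cdot>\<^sub>m Dmat s N a len) $$ (i, j)"
      by (simp add: entry[of i j])
  qed (use D in auto)
qed

lemma signed_symmetric_diagv: "signed_symmetric 1 (dim_vec w) (diagv w)"
  by (rule signed_symmetricI) (auto intro!: eq_matI simp: diagv_def)

lemma quadratic_form_one_plus_square:
  fixes A :: "'a::comm_ring_1 mat"
  assumes "signed_symmetric 1 n A" "v \<in> carrier_vec n"
  shows "v \<bullet> ((1\<^sub>m n + A * A) *\<^sub>v v) = v \<bullet> v + (A *\<^sub>v v) \<bullet> (A *\<^sub>v v)"
proof -
  have A: "A \<in> carrier_mat n n" "transpose_mat A = A"
    using assms(1) by (auto dest: signed_symmetricD signed_symmetric_1_transpose)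
  have "(A *\<^sub>v v) \<bullet> (A *\<^sub>v v) = v \<bullet> (A *\<^sub>v (A *\<^sub>v v))"
    using transpose_vec_mult_scalar[OF A(1), of "A *\<^sub>v v" v] A assms(2) by simp
  with A assms(2) show ?thesis
    by (simp add: add_mult_distrib_mat_vec[of _ n n] scalar_prod_add_distrib[of _ n] assoc_mult_mat_vec[of _ n n])
qed

lemma signed_symmetric_Aop: "signed_symmetric 1 (N2 * N1) (Aop xL xR N1 yL yR N2)"
  unfolding Aop_def
  using signed_symmetric_kron[OF signed_symmetric_one_mat signed_symmetric_Dmat[of 2]]
    signed_symmetric_kron[OF signed_symmetric_Dmat[of 2] signed_symmetric_one_mat]
  by (intro signed_symmetric_add) simp_all

lemma signed_symmetric_Lop: "signed_symmetric (-1) (N2 * N1) (Lop xL xR N1 yL yR N2)"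
  unfolding Lop_def
  using signed_symmetric_kron[OF signed_symmetric_one_mat signed_symmetric_Dmat[of 1]]
    signed_symmetric_kron[OF signed_symmetric_Dmat[of 1] signed_symmetric_one_mat]
  by (intro signed_symmetric_add) simp_all

lemma signed_symmetric_Bop: "signed_symmetric (-1) (N2 * N1) (Bop xL xR N1 yL yR N2)"
  unfolding Bop_def
  using signed_symmetric_kron[OF signed_symmetric_one_mat signed_symmetric_Dmat[of 3]]
    signed_symmetric_kron[OF signed_symmetric_Dmat[of 2] signed_symmetric_Dmat[of 1]]
  by (intro signed_symmetric_add) simp_all

lemma signed_symmetric_Dop:
  assumes "dim_vec W = N2 * N1"
  shows "signed_symmetric (-1) (N2 * N1) (Dop xL xR N1 yL yR N2 p W)"
  unfolding Dop_def
  using assms signed_symmetric_diagv[of "map_vec (\<lambda>w. w ^ p) W"]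
  by (intro signed_symmetric_add signed_symmetric_Bop signed_symmetric_Lop signed_symmetric_smult
      signed_symmetric_anticommutator) simp_all

lemma momentum_eq_quadratic_form:
  assumes "U \<in> carrier_vec (N2 * N1)"
  shows "momentum xL xR N1 yL yR N2 U = (xR - xL) / real N1 * ((yR - yL) / real N2)
    * (U \<bullet> ((1\<^sub>m (N2 * N1) + Aop xL xR N1 yL yR N2 * Aop xL xR N1 yL yR N2) *\<^sub>v U))"
  unfolding quadratic_form_one_plus_square[OF signed_symmetric_Aop assms]
  by (simp add: momentum_def semi2h_sq_def normh_sq_def inner_h_def distrib_left)

theorem theorem3p1:
  fixes xL xR yL yR \<tau> :: real and N1 N2 M p :: nat and U :: "nat \<Rightarrow> real vec"
  defines "AA \<equiv> Aop xL xR N1 yL yR N2"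
      and "DD \<equiv> Dop xL xR N1 yL yR N2 p"
      and "n0 \<equiv> N1 * N2"
  assumes "xL < xR" and "yL < yR"
      and "even N1" and "even N2" and "N1 > 0" and "N2 > 0"
      and "\<tau> > 0" and "p \<ge> 1"
      and dims: "\<And>n. n \<le> M \<Longrightarrow> dim_vec (U n) = n0"
      and first: "M \<ge> 1 \<Longrightarrow>
        (1\<^sub>m n0 + AA * AA) *\<^sub>v ((1 / \<tau>) \<cdot>\<^sub>v (U 1 - U 0))
        + DD (U 0) *\<^sub>v ((1 / 2) \<cdot>\<^sub>v (U 1 + U 0)) = 0\<^sub>v n0"
      and step: "\<And>n. 1 \<le> n \<Longrightarrow> n \<le> M - 1 \<Longrightarrow>
        (1\<^sub>m n0 + AA * AA) *\<^sub>v ((1 / \<tau>) \<cdot>\<^sub>v (U (n + 1) - U n))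
        + DD ((1 / 2) \<cdot>\<^sub>v (3 \<cdot>\<^sub>v U n - U (n - 1))) *\<^sub>v ((1 / 2) \<cdot>\<^sub>v (U (n + 1) + U n))
        = 0\<^sub>v n0"
  shows "\<forall>n \<le> M. momentum xL xR N1 yL yR N2 (U n) = momentum xL xR N1 yL yR N2 (U (n - 1))
                 \<and> momentum xL xR N1 yL yR N2 (U n) = momentum xL xR N1 yL yR N2 (U 0)"
proof -
  have n0: "n0 = N2 * N1"
    by (simp add: n0_def)
  have Q: "signed_symmetric 1 n0 (1\<^sub>m n0 + AA * AA)"
    unfolding AA_def n0
    using signed_symmetric_mult_self[OF signed_symmetric_Aop]
    by (intro signed_symmetric_add signed_symmetric_one_mat) simp
  have S: "signed_symmetric (-1) n0 (DD W)" if "dim_vec W = n0" for W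
    using signed_symmetric_Dop that unfolding DD_def n0 .
  have U: "U n \<in> carrier_vec n0" if "n \<le> M" for n
    using dims[OF that] by (rule carrier_vecI)
  have \<tau>: "1 / \<tau> \<noteq> 0"
    using \<open>\<tau> > 0\<close> by simp
  have momentum_step: "momentum xL xR N1 yL yR N2 (U (Suc n)) = momentum xL xR N1 yL yR N2 (U n)"
    if "n < M" for n
  proof -
    have "U (Suc n) \<bullet> ((1\<^sub>m n0 + AA * AA) *\<^sub>v U (Suc n)) = U n \<bullet> ((1\<^sub>m n0 + AA * AA) *\<^sub>v U n)"
    proof (cases n)
      case 0
      with that have "M \<ge> 1"
        by simp
      from midpoint_step_preserves_quadratic_form[OF Q S[OF dims] U U \<tau> first[OF this]] 0 this
      show ?thesis
        by simp
    next
      case (Suc m)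
      with that have "1 \<le> n" "n \<le> M - 1"
        by simp_all
      from midpoint_step_preserves_quadratic_form[OF Q S U U \<tau> step[OF this]] that show ?thesis
        by (simp add: dims)
    qed
    with U[of n] U[of "Suc n"] that show ?thesis
      unfolding AA_def n0 by (simp add: momentum_eq_quadratic_form)
  qed
  have to_initial: "momentum xL xR N1 yL yR N2 (U n) = momentum xL xR N1 yL yR N2 (U 0)"
    if "n \<le> M" for n
    using that by (induction n) (simp_all add: momentum_step)
  show ?thesis
    using to_initial by (metis diff_le_self order_trans)
qed

end
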